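(* Let $(M^4,g)$ be an oriented Einstein $4$-manifold whose sectional curvature is semi-definite (i.e. either $\sec_g\ge 0$ everywhere or $\sec_g\le 0$ everywhere). Then at every point of $M$ \[ \frac{|s_g|}{\sqrt{6}}\geq |W^+|+|W^-|. \] *)

theory Defs
  imports Complex_Main
begin

text \<open>Pointwise (algebraic) model of the curvature of an oriented Riemannian 4-manifold.
  At each point the Riemann curvature tensor is given by its components
  R i j k l (i,j,k,l in {0,1,2,3}) with respect to a positively oriented orthonormal frame
  of the tangent space.  Convention: R i j i j is the sectional curvature of the plane
  spanned by e_i, e_j (i ~= j).\<close>

type_synonym tensor4 = "nat \<Rightarrow> nat \<Rightarrow> nat \<Rightarrow> nat \<Rightarrow> real"

definition idx :: "nat set" where "idx = {..<4}"

definition kdelta :: "nat \<Rightarrow> nat \<Rightarrow> real" where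
  "kdelta i j = (if i = j then 1 else 0)"

definition alg_curv :: "tensor4 \<Rightarrow> bool" where
  "alg_curv R \<longleftrightarrow> (\<forall>i\<in>idx. \<forall>j\<in>idx. \<forall>k\<in>idx. \<forall>l\<in>idx.
      R i j k l = - R j i k l \<and> R i j k l = - R i j l k \<and> R i j k l = R k l i j \<and>
      R i j k l + R j k i l + R k i j l = 0)"

definition inner4 :: "(nat \<Rightarrow> real) \<Rightarrow> (nat \<Rightarrow> real) \<Rightarrow> real" where
  "inner4 x y = (\<Sum>i\<in>idx. x i * y i)"

definition lin_indep2 :: "(nat \<Rightarrow> real) \<Rightarrow> (nat \<Rightarrow> real) \<Rightarrow> bool" where
  "lin_indep2 x y \<longleftrightarrow> (\<forall>a b. (\<forall>i\<in>idx. a * x i + b * y i = 0) \<longrightarrow> a = 0 \<and> b = 0)"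

definition sec_curv :: "tensor4 \<Rightarrow> (nat \<Rightarrow> real) \<Rightarrow> (nat \<Rightarrow> real) \<Rightarrow> real" where
  "sec_curv R x y =
     (\<Sum>i\<in>idx. \<Sum>j\<in>idx. \<Sum>k\<in>idx. \<Sum>l\<in>idx. R i j k l * x i * y j * x k * y l)
     / (inner4 x x * inner4 y y - (inner4 x y)^2)"

definition ricci :: "tensor4 \<Rightarrow> nat \<Rightarrow> nat \<Rightarrow> real" where
  "ricci R i k = (\<Sum>j\<in>idx. R i j k j)"

definition scal :: "tensor4 \<Rightarrow> real" where
  "scal R = (\<Sum>i\<in>idx. ricci R i i)"

definition einstein_at :: "tensor4 \<Rightarrow> bool" where
  "einstein_at R \<longleftrightarrow> (\<exists>c. \<forall>i\<in>idx. \<forall>k\<in>idx. ricci R i k = c * kdelta i k)"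

definition weyl :: "tensor4 \<Rightarrow> tensor4" where
  "weyl R i j k l = R i j k l
     - (1/2) * (ricci R i k * kdelta j l + ricci R j l * kdelta i k
                - ricci R i l * kdelta j k - ricci R j k * kdelta i l)
     + (scal R / 6) * (kdelta i k * kdelta j l - kdelta i l * kdelta j k)"

text \<open>Levi-Civita symbol for the orientation of the frame (epsilon 0 1 2 3 = 1).\<close>
definition eps :: "nat \<Rightarrow> nat \<Rightarrow> nat \<Rightarrow> nat \<Rightarrow> real" where
  "eps i j k l = (if i < 4 \<and> j < 4 \<and> k < 4 \<and> l < 4 then
      of_int (sgn (int j - int i) * sgn (int k - int i) * sgn (int l - int i)
            * sgn (int k - int j) * sgn (int l - int j) * sgn (int l - int k))
    else 0)"

text \<open>Identity and Hodge star on 2-forms in 4-index form, and projections onto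
  self-dual / anti-self-dual 2-forms.\<close>
definition id2 :: tensor4 where
  "id2 i j a b = (kdelta i a * kdelta j b - kdelta i b * kdelta j a) / 2"

definition hodge2 :: tensor4 where
  "hodge2 i j a b = eps i j a b / 2"

definition proj_plus :: tensor4 where
  "proj_plus i j a b = (id2 i j a b + hodge2 i j a b) / 2"

definition proj_minus :: tensor4 where
  "proj_minus i j a b = (id2 i j a b - hodge2 i j a b) / 2"

text \<open>W^+ = P_+ W P_+, W^- = P_- W P_- (as operators on 2-forms).\<close>
definition sandwich :: "tensor4 \<Rightarrow> tensor4 \<Rightarrow> tensor4" where
  "sandwich P T i j k l =
     (\<Sum>a\<in>idx. \<Sum>b\<in>idx. \<Sum>c\<in>idx. \<Sum>d\<in>idx. P i j a b * T a b c d * P c d k l)"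

definition weyl_plus :: "tensor4 \<Rightarrow> tensor4" where
  "weyl_plus R = sandwich proj_plus (weyl R)"

definition weyl_minus :: "tensor4 \<Rightarrow> tensor4" where
  "weyl_minus R = sandwich proj_minus (weyl R)"

text \<open>Norm of a curvature-type tensor viewed as a self-adjoint endomorphism of the space of
  2-forms (orthonormal basis e_i wedge e_j, i<j): |T|^2 = (1/4) sum_{ijkl} T_{ijkl}^2.\<close>
definition norm2form :: "tensor4 \<Rightarrow> real" where
  "norm2form T = sqrt ((1/4) * (\<Sum>i\<in>idx. \<Sum>j\<in>idx. \<Sum>k\<in>idx. \<Sum>l\<in>idx. (T i j k l)^2))"

end

theory Submission
  imports Defs
begin

text \<open>At a point, split \<open>\<Lambda>\<^sup>2 = \<Lambda>\<^sup>+ \<oplus> \<Lambda>\<^sup>-\<close>. For an Einstein metric the curvature operator is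
  \<open>diag(W\<^sup>+ + s/12, W\<^sup>- + s/12)\<close>, and a unit self-dual \<open>u\<close> and a unit anti-self-dual \<open>v\<close> combine
  to the decomposable 2-form \<open>(u + v)/\<surd>2\<close>; its plane has sectional curvature
  \<open>s/12 + (\<langle>W\<^sup>+u, u\<rangle> + \<langle>W\<^sup>-v, v\<rangle>)/2\<close>. If \<open>sec \<ge> 0\<close>, the least eigenvalues therefore satisfy
  \<open>\<lambda>\<^sup>+ + \<lambda>\<^sup>- \<ge> -s/6\<close>. A traceless symmetric \<open>3 \<times> 3\<close> matrix with least eigenvalue \<open>\<lambda>\<close> has norm at most
  \<open>\<surd>6 |\<lambda>|\<close>, so \<open>|W\<^sup>+| + |W\<^sup>-| \<le> -\<surd>6 (\<lambda>\<^sup>+ + \<lambda>\<^sup>-) \<le> s/\<surd>6\<close>. For \<open>sec \<le> 0\<close> reverse all signs.\<close>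

lemma idx_eq: "idx = {0, 1, 2, 3}"
  by (auto simp: idx_def)

lemma sum_idx: "sum f idx = f 0 + f 1 + f 2 + f 3"
  by (simp add: idx_eq add.assoc)

lemma sum_lessThan_3: "(\<Sum>p<(3::nat). f p) = f 0 + f 1 + (f 2 :: real)"
  by (simp add: numeral_3_eq_3 numeral_2_eq_2 add.assoc)

lemma sum_lessThan_6: "(\<Sum>p<(6::nat). f p) = f 0 + f 1 + f 2 + f 3 + f 4 + (f 5 :: real)"
  by (simp add: eval_nat_numeral add.assoc)

lemma less_6_cases: "(r::nat) < 6 \<longleftrightarrow> r = 0 \<or> r = 1 \<or> r = 2 \<or> r = 3 \<or> r = 4 \<or> r = 5"
  by auto

lemma less_3_cases: "(a::nat) < 3 \<longleftrightarrow> a = 0 \<or> a = 1 \<or> a = 2"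
  by auto

section \<open>Traceless symmetric \<open>3 \<times> 3\<close> matrices\<close>

lemma discriminant_le_of_nonneg:
  fixes a b c :: real
  assumes nonneg: "\<And>t. 0 \<le> a * t\<^sup>2 + 2 * b * t + c" and "0 \<le> a"
  shows "b\<^sup>2 \<le> a * c"
proof (cases "a = 0")
  case True
  have "b = 0"
  proof (rule ccontr)
    assume "b \<noteq> 0"
    then have "a * (-(c + 1) / (2 * b))\<^sup>2 + 2 * b * (-(c + 1) / (2 * b)) + c = -1"
      using True by (simp add: field_simps)
    with nonneg show False
      by (metis neg_0_le_iff_le not_one_le_zero)
  qed
  with True show ?thesis
    by simp
next
  case False
  with \<open>0 \<le> a\<close> have "0 < a"
    by simp
  have "0 \<le> a * (-b / a)\<^sup>2 + 2 * b * (-b / a) + c"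
    by (rule nonneg)
  also have "\<dots> = c - b\<^sup>2 / a"
    using \<open>0 < a\<close> by (simp add: field_simps power2_eq_square)
  finally show ?thesis
    using \<open>0 < a\<close> by (simp add: field_simps mult.commute)
qed

definition norm3 :: "(nat \<Rightarrow> real) \<Rightarrow> real" where
  "norm3 u = (\<Sum>a<3. (u a)\<^sup>2)"

definition quad3 :: "(nat \<Rightarrow> nat \<Rightarrow> real) \<Rightarrow> (nat \<Rightarrow> real) \<Rightarrow> real" where
  "quad3 w u = (\<Sum>a<3. \<Sum>b<3. w a b * u a * u b)"

definition frob3 :: "(nat \<Rightarrow> nat \<Rightarrow> real) \<Rightarrow> real" where
  "frob3 w = (\<Sum>a<3. \<Sum>b<3. (w a b)\<^sup>2)"

text \<open>If \<open>w \<ge> m\<close>, the \<open>2 \<times> 2\<close> principal minors of \<open>w - m\<close> are nonnegative, and for traceless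
  \<open>w\<close> their sum is \<open>3 m\<^sup>2 - frob3 w / 2\<close>.\<close>
lemma frob3_le_of_lower_bound:
  fixes w :: "nat \<Rightarrow> nat \<Rightarrow> real"
  assumes sym: "\<And>a b. a < 3 \<Longrightarrow> b < 3 \<Longrightarrow> w b a = w a b"
    and trace: "(\<Sum>a<3. w a a) = 0"
    and lower: "\<And>u. m * norm3 u \<le> quad3 w u"
  shows "m \<le> 0 \<and> frob3 w \<le> 6 * m\<^sup>2"
proof -
  have w_sym: "w 1 0 = w 0 1" "w 2 0 = w 0 2" "w 2 1 = w 1 2"
    using sym by simp_all
  have w22: "w 2 2 = - w 0 0 - w 1 1"
    using trace by (simp add: sum_lessThan_3)
  have lower3: "m * (x\<^sup>2 + y\<^sup>2 + z\<^sup>2) \<le> w 0 0 * x\<^sup>2 + w 1 1 * y\<^sup>2 + w 2 2 * z\<^sup>2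
      + 2 * w 0 1 * x * y + 2 * w 0 2 * x * z + 2 * w 1 2 * y * z" for x y z
    using lower[of "\<lambda>a. if a = 0 then x else if a = 1 then y else z"]
    by (simp add: norm3_def quad3_def sum_lessThan_3 w_sym[unfolded One_nat_def] power2_eq_square
        algebra_simps)
  have d0: "0 \<le> w 0 0 - m" and d1: "0 \<le> w 1 1 - m" and d2: "0 \<le> w 2 2 - m"
    using lower3[of 1 0 0] lower3[of 0 1 0] lower3[of 0 0 1] by simp_all
  have minor01: "(w 0 1)\<^sup>2 \<le> (w 0 0 - m) * (w 1 1 - m)"
    by (rule discriminant_le_of_nonneg[OF _ d0]) (use lower3[of _ 1 0] in \<open>simp add: algebra_simps\<close>)
  have minor02: "(w 0 2)\<^sup>2 \<le> (w 0 0 - m) * (w 2 2 - m)"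
    by (rule discriminant_le_of_nonneg[OF _ d0]) (use lower3[of _ 0 1] in \<open>simp add: algebra_simps\<close>)
  have minor12: "(w 1 2)\<^sup>2 \<le> (w 1 1 - m) * (w 2 2 - m)"
    by (rule discriminant_le_of_nonneg[OF _ d1]) (use lower3[of 0 _ 1] in \<open>simp add: algebra_simps\<close>)
  define minors where "minors = ((w 0 0 - m) * (w 1 1 - m) - (w 0 1)\<^sup>2)
      + ((w 0 0 - m) * (w 2 2 - m) - (w 0 2)\<^sup>2) + ((w 1 1 - m) * (w 2 2 - m) - (w 1 2)\<^sup>2)"
  have "frob3 w = 6 * m\<^sup>2 - 2 * minors"
    by (simp add: minors_def frob3_def sum_lessThan_3 w_sym[unfolded One_nat_def] w22 power2_eq_square
        algebra_simps)
  moreover have "0 \<le> minors"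
    using minor01 minor02 minor12 unfolding minors_def by simp
  ultimately have "frob3 w \<le> 6 * m\<^sup>2"
    by linarith
  moreover have "m \<le> 0"
    using d0 d1 d2 trace by (simp add: sum_lessThan_3)
  ultimately show ?thesis
    by simp
qed

lemma lower_bound_of_unit:
  assumes unit: "\<And>u. norm3 u = 1 \<Longrightarrow> m \<le> quad3 w u"
  shows "m * norm3 u \<le> quad3 w u"
proof (cases "norm3 u = 0")
  case True
  then have "u 0 = 0" "u 1 = 0" "u 2 = 0"
    by (simp_all add: norm3_def sum_lessThan_3 sum_nonneg_eq_0_iff add_nonneg_eq_0_iff)
  with True show ?thesis
    by (simp add: quad3_def sum_lessThan_3)
next
  case False
  then have pos: "0 < norm3 u"
    by (simp add: norm3_def sum_nonneg order_less_le)
  define r where "r = sqrt (norm3 u)"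
  have "0 < r" "r\<^sup>2 = norm3 u"
    using pos by (simp_all add: r_def)
  have "norm3 (\<lambda>a. u a / r) = norm3 u / r\<^sup>2"
    by (simp add: norm3_def power_divide sum_divide_distrib)
  then have "m \<le> quad3 w (\<lambda>a. u a / r)"
    using pos \<open>r\<^sup>2 = norm3 u\<close> by (intro unit) simp
  also have "quad3 w (\<lambda>a. u a / r) = quad3 w u / r\<^sup>2"
    by (simp add: quad3_def sum_divide_distrib power2_eq_square)
  finally show ?thesis
    using pos \<open>r\<^sup>2 = norm3 u\<close> by (simp add: field_simps)
qed

text \<open>With \<open>m\<close> the least eigenvalue of \<open>A\<close>, the hypothesis bounds \<open>B\<close> below by \<open>-s/6 - m\<close>.\<close>
lemma frob3_sum_le_of_unit_bound:
  fixes A B :: "nat \<Rightarrow> nat \<Rightarrow> real"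
  assumes symA: "\<And>a b. a < 3 \<Longrightarrow> b < 3 \<Longrightarrow> A b a = A a b" and traceA: "(\<Sum>a<3. A a a) = 0"
    and symB: "\<And>a b. a < 3 \<Longrightarrow> b < 3 \<Longrightarrow> B b a = B a b" and traceB: "(\<Sum>a<3. B a a) = 0"
    and bound: "\<And>u v. norm3 u = 1 \<Longrightarrow> norm3 v = 1 \<Longrightarrow> 0 \<le> s / 6 + quad3 A u + quad3 B v"
  shows "sqrt (frob3 A) + sqrt (frob3 B) \<le> s / sqrt 6"
proof -
  define e :: "nat \<Rightarrow> real" where "e a = (if a = 0 then 1 else 0)" for a
  have e: "norm3 e = 1"
    by (simp add: norm3_def e_def sum_lessThan_3)
  define m where "m = Inf {quad3 A u | u. norm3 u = 1}"
  have bdd: "bdd_below {quad3 A u | u. norm3 u = 1}"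
    using bound[OF _ e] by (force intro: bdd_belowI[where m = "- s / 6 - quad3 B e"])
  have mA: "m \<le> quad3 A u" if "norm3 u = 1" for u
    unfolding m_def using that by (intro cInf_lower[OF _ bdd]) auto
  have mB: "- s / 6 - m \<le> quad3 B v" if "norm3 v = 1" for v
  proof -
    have "- s / 6 - quad3 B v \<le> m"
      unfolding m_def using e bound that by (intro cInf_greatest) (auto, force)
    then show ?thesis
      by simp
  qed
  have A: "m \<le> 0 \<and> frob3 A \<le> 6 * m\<^sup>2"
    by (rule frob3_le_of_lower_bound[OF symA traceA lower_bound_of_unit[OF mA]])
  have B: "- s / 6 - m \<le> 0 \<and> frob3 B \<le> 6 * (- s / 6 - m)\<^sup>2"
    by (rule frob3_le_of_lower_bound[OF symB traceB lower_bound_of_unit[OF mB]])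
  have "sqrt (frob3 A) \<le> sqrt 6 * (- m)"
    using A real_sqrt_le_mono[of "frob3 A" "6 * m\<^sup>2"] by (simp add: real_sqrt_mult)
  moreover have "sqrt (frob3 B) \<le> sqrt 6 * (s / 6 + m)"
    using B real_sqrt_le_mono[of "frob3 B" "6 * (- s / 6 - m)\<^sup>2"] by (simp add: real_sqrt_mult add.commute)
  moreover have "sqrt 6 * (s / 6) = s / sqrt 6"
    by (simp add: field_simps flip: real_sqrt_mult)
  ultimately show ?thesis
    using A B by (simp add: algebra_simps)
qed

section \<open>2-forms\<close>

text \<open>The basis \<open>e\<^sub>r\<close>, \<open>r < 6\<close>, of 2-forms: \<open>e\<^sub>0\<^sub>1, e\<^sub>0\<^sub>2, e\<^sub>0\<^sub>3, e\<^sub>1\<^sub>2, e\<^sub>1\<^sub>3, e\<^sub>2\<^sub>3\<close>, ordered so that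
  \<open>e\<^sub>5\<^sub>-\<^sub>r\<close> is \<open>\<plusminus>\<star>e\<^sub>r\<close>.\<close>
definition pair_fst :: "nat \<Rightarrow> nat" where "pair_fst r = [0, 0, 0, 1, 1, 2] ! r"
definition pair_snd :: "nat \<Rightarrow> nat" where "pair_snd r = [1, 2, 3, 2, 3, 3] ! r"

lemma pair_simps [simp]:
  "pair_fst 0 = 0" "pair_fst 1 = 0" "pair_fst 2 = 0" "pair_fst 3 = 1" "pair_fst 4 = 1" "pair_fst 5 = 2"
  "pair_snd 0 = 1" "pair_snd 1 = 2" "pair_snd 2 = 3" "pair_snd 3 = 2" "pair_snd 4 = 3" "pair_snd 5 = 3"
  "pair_fst (Suc 0) = 0" "pair_snd (Suc 0) = 2"
  by (simp_all add: pair_fst_def pair_snd_def eval_nat_numeral)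

lemma pair_in_idx: "r < 6 \<Longrightarrow> pair_fst r \<in> idx" "r < 6 \<Longrightarrow> pair_snd r \<in> idx"
  by (auto simp: less_6_cases idx_eq)

lemma sum_idx_pairs:
  fixes g :: "nat \<Rightarrow> nat \<Rightarrow> real"
  assumes "\<And>a b. a \<in> idx \<Longrightarrow> b \<in> idx \<Longrightarrow> g b a = g a b"
    and "\<And>a. a \<in> idx \<Longrightarrow> g a a = 0"
  shows "(\<Sum>a\<in>idx. \<Sum>b\<in>idx. g a b) = 2 * (\<Sum>r<6. g (pair_fst r) (pair_snd r))"
proof -
  have "g 1 0 = g 0 1" "g 2 0 = g 0 2" "g 3 0 = g 0 3" "g 2 1 = g 1 2" "g 3 1 = g 1 3" "g 3 2 = g 2 3"
    "g 0 0 = 0" "g 1 1 = 0" "g 2 2 = 0" "g 3 3 = 0"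
    using assms by (simp_all add: idx_eq)
  then show ?thesis by (simp add: sum_idx sum_lessThan_6)
qed

definition pair_antisym :: "tensor4 \<Rightarrow> bool" where
  "pair_antisym T \<longleftrightarrow> (\<forall>i\<in>idx. \<forall>j\<in>idx. \<forall>k\<in>idx. \<forall>l\<in>idx.
      T j i k l = - T i j k l \<and> T i j l k = - T i j k l)"

definition pair_matrix :: "tensor4 \<Rightarrow> nat \<Rightarrow> nat \<Rightarrow> real" where
  "pair_matrix T p q = T (pair_fst p) (pair_snd p) (pair_fst q) (pair_snd q)"

lemma pair_antisymD:
  assumes "pair_antisym T" "i \<in> idx" "j \<in> idx" "k \<in> idx" "l \<in> idx"
  shows "T j i k l = - T i j k l" "T i j l k = - T i j k l" "T i i k l = 0" "T i j k k = 0"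
proof -
  have swap: "T j' i' k' l' = - T i' j' k' l' \<and> T i' j' l' k' = - T i' j' k' l'"
    if "i' \<in> idx" "j' \<in> idx" "k' \<in> idx" "l' \<in> idx" for i' j' k' l'
    using assms(1) that unfolding pair_antisym_def by blast
  show "T j i k l = - T i j k l" "T i j l k = - T i j k l"
    using swap[OF assms(2-5)] by simp_all
  show "T i i k l = 0" "T i j k k = 0"
    using swap[OF assms(2,2,4,5)] swap[OF assms(2,3,4,4)] by simp_all
qed

lemma norm2form_pair_matrix:
  assumes T: "pair_antisym T"
  shows "norm2form T = sqrt (\<Sum>p<6. \<Sum>q<6. (pair_matrix T p q)\<^sup>2)"
proof -
  have inner: "(\<Sum>k\<in>idx. \<Sum>l\<in>idx. (T i j k l)\<^sup>2) = 2 * (\<Sum>q<6. (T i j (pair_fst q) (pair_snd q))\<^sup>2)"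
    if ij: "i \<in> idx" "j \<in> idx" for i j
  proof (rule sum_idx_pairs)
    show "(T i j l k)\<^sup>2 = (T i j k l)\<^sup>2" if "k \<in> idx" "l \<in> idx" for k l
      using pair_antisymD(2)[OF T ij that] by simp
    show "(T i j k k)\<^sup>2 = 0" if "k \<in> idx" for k
      using pair_antisymD(4)[OF T ij that that] by simp
  qed
  have outer: "(\<Sum>i\<in>idx. \<Sum>j\<in>idx. \<Sum>q<6. (T i j (pair_fst q) (pair_snd q))\<^sup>2)
      = 2 * (\<Sum>p<6. \<Sum>q<6. (T (pair_fst p) (pair_snd p) (pair_fst q) (pair_snd q))\<^sup>2)"
  proof (rule sum_idx_pairs)
    show "(\<Sum>q<6. (T j i (pair_fst q) (pair_snd q))\<^sup>2) = (\<Sum>q<6. (T i j (pair_fst q) (pair_snd q))\<^sup>2)"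
      if "i \<in> idx" "j \<in> idx" for i j
      using pair_antisymD(1)[OF T that pair_in_idx] by (intro sum.cong) simp_all
    show "(\<Sum>q<6. (T i i (pair_fst q) (pair_snd q))\<^sup>2) = 0" if "i \<in> idx" for i
      using pair_antisymD(3)[OF T that that pair_in_idx] by simp
  qed
  show ?thesis
    by (simp add: norm2form_def inner outer pair_matrix_def flip: sum_distrib_left)
qed

lemma pair_matrix_sandwich:
  assumes P: "pair_antisym P" and T: "pair_antisym T" and pq: "p < 6" "q < 6"
  shows "pair_matrix (sandwich P T) p q
    = 4 * (\<Sum>r<6. \<Sum>s<6. pair_matrix P p r * pair_matrix T r s * pair_matrix P s q)"
proof -
  let ?i = "pair_fst p" and ?j = "pair_snd p" and ?k = "pair_fst q" and ?l = "pair_snd q"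
  have ijkl: "?i \<in> idx" "?j \<in> idx" "?k \<in> idx" "?l \<in> idx"
    using pq by (simp_all add: pair_in_idx)
  define h where "h a b = (\<Sum>s<6. T a b (pair_fst s) (pair_snd s) * pair_matrix P s q)" for a b
  have inner: "(\<Sum>c\<in>idx. \<Sum>d\<in>idx. T a b c d * P c d ?k ?l) = 2 * h a b"
    if ab: "a \<in> idx" "b \<in> idx" for a b
  proof -
    have "(\<Sum>c\<in>idx. \<Sum>d\<in>idx. T a b c d * P c d ?k ?l)
        = 2 * (\<Sum>s<6. T a b (pair_fst s) (pair_snd s) * P (pair_fst s) (pair_snd s) ?k ?l)"
    proof (rule sum_idx_pairs)
      show "T a b d c * P d c ?k ?l = T a b c d * P c d ?k ?l" if "c \<in> idx" "d \<in> idx" for c d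
        using pair_antisymD(2)[OF T ab that] pair_antisymD(1)[OF P that ijkl(3,4)] by simp
      show "T a b c c * P c c ?k ?l = 0" if "c \<in> idx" for c
        using pair_antisymD(4)[OF T ab that that] by simp
    qed
    then show ?thesis
      by (simp add: h_def pair_matrix_def)
  qed
  have "pair_matrix (sandwich P T) p q = (\<Sum>a\<in>idx. \<Sum>b\<in>idx. P ?i ?j a b * (2 * h a b))"
    unfolding pair_matrix_def sandwich_def
    by (intro sum.cong refl) (simp add: inner[symmetric] sum_distrib_left mult.assoc)
  also have "\<dots> = 2 * (\<Sum>r<6. P ?i ?j (pair_fst r) (pair_snd r) * (2 * h (pair_fst r) (pair_snd r)))"
  proof (rule sum_idx_pairs)
    show "P ?i ?j b a * (2 * h b a) = P ?i ?j a b * (2 * h a b)" if "a \<in> idx" "b \<in> idx" for a b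
      using pair_antisymD(2)[OF P ijkl(1,2) that] pair_antisymD(1)[OF T that pair_in_idx]
      by (simp add: h_def sum_negf)
    show "P ?i ?j a a * (2 * h a a) = 0" if "a \<in> idx" for a
      using pair_antisymD(4)[OF P ijkl(1,2) that that] by simp
  qed
  also have "\<dots> = 4 * (\<Sum>r<6. \<Sum>s<6. pair_matrix P p r * pair_matrix T r s * pair_matrix P s q)"
    by (simp add: h_def pair_matrix_def sum_distrib_left sum_distrib_right mult_ac)
  finally show ?thesis .
qed

definition wedge :: "(nat \<Rightarrow> real) \<Rightarrow> (nat \<Rightarrow> real) \<Rightarrow> nat \<Rightarrow> real" where
  "wedge x y r = x (pair_fst r) * y (pair_snd r) - x (pair_snd r) * y (pair_fst r)"

lemma gram_eq_sum_wedge: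
  "inner4 x x * inner4 y y - (inner4 x y)\<^sup>2 = (\<Sum>r<6. (wedge x y r)\<^sup>2)"
  by (simp add: inner4_def wedge_def sum_idx sum_lessThan_6 power2_eq_square algebra_simps)

lemma lin_indep2_of_coords:
  assumes "i \<in> idx" "j \<in> idx" "x i = 0" "x j \<noteq> 0" "y i \<noteq> 0" "y j = 0"
  shows "lin_indep2 x y"
  unfolding lin_indep2_def
proof (intro allI impI)
  fix a b
  assume "\<forall>t\<in>idx. a * x t + b * y t = 0"
  then have "a * x i + b * y i = 0" "a * x j + b * y j = 0"
    using assms(1,2) by blast+
  with assms(3-6) show "a = 0 \<and> b = 0"
    by simp
qed

definition two_form :: "(nat \<Rightarrow> real) \<Rightarrow> nat \<Rightarrow> nat \<Rightarrow> real" where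
  "two_form \<alpha> i j = (\<Sum>r<6. \<alpha> r * (kdelta i (pair_fst r) * kdelta j (pair_snd r)
                                    - kdelta i (pair_snd r) * kdelta j (pair_fst r)))"

lemma two_form_swap: "two_form \<alpha> j i = - two_form \<alpha> i j"
  unfolding two_form_def by (simp add: sum_negf[symmetric] algebra_simps mult.commute)

lemma two_form_diag: "two_form \<alpha> i i = 0"
  by (simp add: two_form_def mult.commute)

lemma two_form_pair: "r < 6 \<Longrightarrow> two_form \<alpha> (pair_fst r) (pair_snd r) = \<alpha> r"
  unfolding less_6_cases by (elim disjE; simp add: two_form_def sum_lessThan_6 kdelta_def)

text \<open>A 2-form \<open>\<alpha>\<close> with \<open>\<alpha> \<and> \<alpha> = 0\<close> and \<open>\<alpha>(e\<^sub>i, e\<^sub>j) \<noteq> 0\<close> is \<open>x \<and> y\<close> for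
  \<open>x = \<alpha>(e\<^sub>i, -) / \<alpha>(e\<^sub>i, e\<^sub>j)\<close> and \<open>y = \<alpha>(e\<^sub>j, -)\<close>.\<close>
lemma decomposable_of_pluecker:
  assumes pluecker: "\<alpha> 0 * \<alpha> 5 - \<alpha> 1 * \<alpha> 4 + \<alpha> 2 * \<alpha> 3 = 0"
    and r: "r < 6" "\<alpha> r \<noteq> 0"
  shows "\<exists>x y. lin_indep2 x y \<and> (\<forall>q<6. wedge x y q = \<alpha> q)"
proof -
  define x where "x m = two_form \<alpha> (pair_fst r) m / \<alpha> r" for m
  define y where "y m = two_form \<alpha> (pair_snd r) m" for m
  have "lin_indep2 x y"
    using r by (intro lin_indep2_of_coords[of "pair_fst r" "pair_snd r"])
      (simp_all add: x_def y_def pair_in_idx two_form_diag two_form_pair two_form_swap[of _ "pair_snd r"])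
  moreover have "wedge x y q = \<alpha> q" if "q < 6" for q
    using r that pluecker unfolding less_6_cases
    by (elim disjE; simp add: x_def y_def wedge_def two_form_def sum_lessThan_6 kdelta_def field_simps)
  ultimately show ?thesis
    by blast
qed

section \<open>Self-dual and anti-self-dual 2-forms\<close>

text \<open>\<open>\<star>e\<^sub>a = hodge_sign a \<cdot> e\<^sub>5\<^sub>-\<^sub>a\<close> for \<open>a < 3\<close>. The vectors \<open>sd_basis t a = e\<^sub>a + t \<star>e\<^sub>a\<close>
  (\<open>a < 3\<close>) are orthogonal of squared length 2, spanning \<open>\<Lambda>\<^sup>+\<close> for \<open>t = 1\<close> and \<open>\<Lambda>\<^sup>-\<close> for \<open>t = -1\<close>;
  \<open>sd_block t T\<close> is the matrix of \<open>T\<close> on that space in the orthonormal basis \<open>sd_basis t a / \<surd>2\<close>.\<close>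
definition hodge_sign :: "nat \<Rightarrow> real" where "hodge_sign a = [1, -1, 1] ! a"

definition sd_basis :: "real \<Rightarrow> nat \<Rightarrow> nat \<Rightarrow> real" where
  "sd_basis t a r = (if r = a then 1 else if r = 5 - a then t * hodge_sign a else 0)"

definition sd_block :: "real \<Rightarrow> tensor4 \<Rightarrow> nat \<Rightarrow> nat \<Rightarrow> real" where
  "sd_block t T a b = (\<Sum>r<6. \<Sum>s<6. sd_basis t a r * pair_matrix T r s * sd_basis t b s) / 2"

lemma sgn_diff_swap: "sgn (int a - int b) = - sgn (int b - int a)"
  by (simp add: sgn_if)

lemma eps_swap_12: "eps j i a b = - eps i j a b"
  using sgn_diff_swap[of i j] sgn_diff_swap[of a i] sgn_diff_swap[of a j]
    sgn_diff_swap[of b i] sgn_diff_swap[of b j]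
  by (auto simp: eps_def mult_ac)

lemma eps_swap_34: "eps i j b a = - eps i j a b"
  using sgn_diff_swap[of a b] by (auto simp: eps_def mult_ac)

lemma pair_antisym_proj_plus: "pair_antisym proj_plus"
proof -
  have "proj_plus j i a b = - proj_plus i j a b" "proj_plus i j b a = - proj_plus i j a b" for i j a b
    unfolding proj_plus_def id2_def hodge2_def eps_swap_12[of j i] eps_swap_34[of i j b]
    by (simp_all add: field_simps)
  then show ?thesis
    unfolding pair_antisym_def by blast
qed

lemma pair_antisym_proj_minus: "pair_antisym proj_minus"
proof -
  have "proj_minus j i a b = - proj_minus i j a b" "proj_minus i j b a = - proj_minus i j a b" for i j a b
    unfolding proj_minus_def id2_def hodge2_def eps_swap_12[of j i] eps_swap_34[of i j b]
    by (simp_all add: field_simps)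
  then show ?thesis
    unfolding pair_antisym_def by blast
qed

lemma pair_matrix_proj_plus:
  "p < 6 \<Longrightarrow> r < 6 \<Longrightarrow> 4 * pair_matrix proj_plus p r = (\<Sum>a<3. sd_basis 1 a p * sd_basis 1 a r)"
  unfolding less_6_cases
  by (elim disjE; simp add: pair_matrix_def proj_plus_def id2_def hodge2_def eps_def kdelta_def
      sd_basis_def hodge_sign_def sum_lessThan_3)

lemma pair_matrix_proj_minus:
  "p < 6 \<Longrightarrow> r < 6 \<Longrightarrow> 4 * pair_matrix proj_minus p r = (\<Sum>a<3. sd_basis (-1) a p * sd_basis (-1) a r)"
  unfolding less_6_cases
  by (elim disjE; simp add: pair_matrix_def proj_minus_def id2_def hodge2_def eps_def kdelta_def
      sd_basis_def hodge_sign_def sum_lessThan_3)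

lemma pair_antisym_sandwich:
  assumes "pair_antisym P"
  shows "pair_antisym (sandwich P T)"
proof -
  have "sandwich P T j i k l = - sandwich P T i j k l \<and> sandwich P T i j l k = - sandwich P T i j k l"
    if "i \<in> idx" "j \<in> idx" "k \<in> idx" "l \<in> idx" for i j k l
  proof -
    have "P j i a b = - P i j a b" "P c d l k = - P c d k l" if "a \<in> idx" "b \<in> idx" "c \<in> idx" "d \<in> idx" for a b c d
      using pair_antisymD(1)[OF assms \<open>i \<in> idx\<close> \<open>j \<in> idx\<close> that(1,2)]
        pair_antisymD(2)[OF assms that(3,4) \<open>k \<in> idx\<close> \<open>l \<in> idx\<close>] by simp_all
    then show ?thesis
      unfolding sandwich_def by (simp add: sum_negf)
  qed
  then show ?thesis
    unfolding pair_antisym_def by blast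
qed

lemma pair_matrix_sandwich_sd:
  assumes P: "pair_antisym P" and T: "pair_antisym T"
    and hP: "\<And>p r. p < 6 \<Longrightarrow> r < 6 \<Longrightarrow> 4 * pair_matrix P p r = (\<Sum>a<3. sd_basis t a p * sd_basis t a r)"
    and pq: "p < 6" "q < 6"
  shows "pair_matrix (sandwich P T) p q
    = (\<Sum>a<3. \<Sum>b<3. sd_basis t a p * sd_basis t b q * sd_block t T a b) / 2"
proof -
  have P_eq: "pair_matrix P p' r = (\<Sum>a<3. sd_basis t a p' * sd_basis t a r) / 4"
    if "p' < 6" "r < 6" for p' r
    using hP[OF that] by simp
  have "pair_matrix (sandwich P T) p q
      = 4 * (\<Sum>r<6. \<Sum>s<6. (\<Sum>a<3. sd_basis t a p * sd_basis t a r) / 4 * pair_matrix T r s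
          * ((\<Sum>b<3. sd_basis t b s * sd_basis t b q) / 4))"
    unfolding pair_matrix_sandwich[OF P T pq]
    by (intro arg_cong[where f = "\<lambda>x. 4 * x"] sum.cong refl) (simp add: P_eq pq)
  also have "\<dots> = (\<Sum>r<6. \<Sum>s<6. \<Sum>a<3. \<Sum>b<3.
      sd_basis t a p * sd_basis t b q * (sd_basis t a r * pair_matrix T r s * sd_basis t b s)) / 4"
    by (simp add: sum_distrib_left sum_distrib_right sum_divide_distrib mult_ac)
  also have "\<dots> = (\<Sum>a<3. \<Sum>b<3. \<Sum>r<6. \<Sum>s<6.
      sd_basis t a p * sd_basis t b q * (sd_basis t a r * pair_matrix T r s * sd_basis t b s)) / 4"
    by (simp only: sum.swap[of _ "{..<6::nat}" "{..<3::nat}"])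
  also have "\<dots> = (\<Sum>a<3. \<Sum>b<3. sd_basis t a p * sd_basis t b q * sd_block t T a b) / 2"
    by (simp add: sd_block_def sum_distrib_left sum_divide_distrib)
  finally show ?thesis .
qed

lemma frob3_sd_expansion:
  assumes "t\<^sup>2 = 1"
  shows "(\<Sum>p<6. \<Sum>q<6. ((\<Sum>a<3. \<Sum>b<3. sd_basis t a p * sd_basis t b q * w a b) / 2)\<^sup>2) = frob3 w"
  by (simp add: assms frob3_def sum_lessThan_3 sum_lessThan_6 sd_basis_def hodge_sign_def
      power_divide power_mult_distrib)

lemma norm2form_sandwich_sd:
  assumes P: "pair_antisym P" and T: "pair_antisym T" and t: "t\<^sup>2 = 1"
    and hP: "\<And>p r. p < 6 \<Longrightarrow> r < 6 \<Longrightarrow> 4 * pair_matrix P p r = (\<Sum>a<3. sd_basis t a p * sd_basis t a r)"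
  shows "norm2form (sandwich P T) = sqrt (frob3 (sd_block t T))"
proof -
  have "(\<Sum>p<6. \<Sum>q<6. (pair_matrix (sandwich P T) p q)\<^sup>2)
      = (\<Sum>p<6. \<Sum>q<6. ((\<Sum>a<3. \<Sum>b<3. sd_basis t a p * sd_basis t b q * sd_block t T a b) / 2)\<^sup>2)"
    by (intro sum.cong refl) (simp add: pair_matrix_sandwich_sd[OF P T hP])
  then show ?thesis
    by (simp add: norm2form_pair_matrix[OF pair_antisym_sandwich[OF P]] frob3_sd_expansion[OF t])
qed

lemma bilinear_sum_expand:
  fixes W f g :: "nat \<Rightarrow> nat \<Rightarrow> real" and u v :: "nat \<Rightarrow> real"
  shows "(\<Sum>p<6. \<Sum>q<6. W p q * (\<Sum>a<3. u a * f a p) * (\<Sum>b<3. v b * g b q))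
    = (\<Sum>a<3. \<Sum>b<3. u a * v b * (\<Sum>p<6. \<Sum>q<6. f a p * W p q * g b q))"
proof -
  have "(\<Sum>p<6. \<Sum>q<6. W p q * (\<Sum>a<3. u a * f a p) * (\<Sum>b<3. v b * g b q))
      = (\<Sum>p<6. \<Sum>q<6. \<Sum>a<3. \<Sum>b<3. u a * v b * (f a p * W p q * g b q))"
    by (simp add: sum_distrib_left sum_distrib_right mult_ac)
  also have "\<dots> = (\<Sum>a<3. \<Sum>b<3. \<Sum>p<6. \<Sum>q<6. u a * v b * (f a p * W p q * g b q))"
    by (simp only: sum.swap[of _ "{..<6::nat}" "{..<3::nat}"])
  finally show ?thesis
    by (simp add: sum_distrib_left)
qed

text \<open>Coordinates of \<open>(u + v)/\<surd>2\<close>, where \<open>u \<in> \<Lambda>\<^sup>+\<close> and \<open>v \<in> \<Lambda>\<^sup>-\<close> are given in the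
  orthonormal bases \<open>sd_basis (\<plusminus>1) a / \<surd>2\<close>.\<close>
definition sd_coords :: "(nat \<Rightarrow> real) \<Rightarrow> (nat \<Rightarrow> real) \<Rightarrow> nat \<Rightarrow> real" where
  "sd_coords u v r = (\<Sum>a<3. u a * sd_basis 1 a r + v a * sd_basis (-1) a r) / 2"

lemma sd_coords_pluecker:
  "sd_coords u v 0 * sd_coords u v 5 - sd_coords u v 1 * sd_coords u v 4 + sd_coords u v 2 * sd_coords u v 3
    = (norm3 u - norm3 v) / 4"
  by (simp add: sd_coords_def norm3_def sd_basis_def hodge_sign_def sum_lessThan_3 power2_eq_square
      field_simps)

lemma sd_coords_norm: "(\<Sum>r<6. (sd_coords u v r)\<^sup>2) = (norm3 u + norm3 v) / 2"
  by (simp add: sd_coords_def norm3_def sd_basis_def hodge_sign_def sum_lessThan_3 sum_lessThan_6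
      power2_eq_square field_simps)

section \<open>Curvature\<close>

context
  fixes R :: tensor4
  assumes R: "alg_curv R"
begin

text \<open>Rewriting every component to one with \<open>i < j\<close>, \<open>k < l\<close>, \<open>(i, j) \<le> (k, l)\<close>, and then
  \<open>R\<^sub>0\<^sub>2\<^sub>1\<^sub>3\<close> by the Bianchi identity, gives a normal form: identities that are linear in \<open>R\<close>
  then reduce to arithmetic.\<close>
lemma curv_normalize:
  "i \<in> idx \<Longrightarrow> k \<in> idx \<Longrightarrow> l \<in> idx \<Longrightarrow> R i i k l = 0"
  "i \<in> idx \<Longrightarrow> j \<in> idx \<Longrightarrow> k \<in> idx \<Longrightarrow> R i j k k = 0"
  "i < j \<Longrightarrow> i \<in> idx \<Longrightarrow> j \<in> idx \<Longrightarrow> k \<in> idx \<Longrightarrow> l \<in> idx \<Longrightarrow> R j i k l = - R i j k l"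
  "k < l \<Longrightarrow> i \<in> idx \<Longrightarrow> j \<in> idx \<Longrightarrow> k \<in> idx \<Longrightarrow> l \<in> idx \<Longrightarrow> R i j l k = - R i j k l"
  "k < i \<or> k = i \<and> l < j \<Longrightarrow> i \<in> idx \<Longrightarrow> j \<in> idx \<Longrightarrow> k \<in> idx \<Longrightarrow> l \<in> idx
    \<Longrightarrow> R i j k l = R k l i j"
  using R unfolding alg_curv_def by fastforce+

lemma curv_bianchi: "R 0 2 1 3 = R 0 1 2 3 + R 0 3 1 2"
proof -
  have "R 0 1 2 3 + R 1 2 0 3 + R 2 0 1 3 = 0"
    using R unfolding alg_curv_def idx_eq by blast
  then show ?thesis
    by (simp add: curv_normalize idx_eq)
qed

lemmas curv_simps = curv_normalize curv_bianchi curv_bianchi[unfolded One_nat_def] idx_eq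

lemma sec_curv_wedge:
  "sec_curv R x y = (\<Sum>p<6. \<Sum>q<6. pair_matrix R p q * wedge x y p * wedge x y q)
    / (\<Sum>r<6. (wedge x y r)\<^sup>2)"
  unfolding sec_curv_def gram_eq_sum_wedge
  by (simp add: sum_idx sum_lessThan_6 pair_matrix_def wedge_def curv_simps algebra_simps)

lemma ricci_sym: "i \<in> idx \<Longrightarrow> k \<in> idx \<Longrightarrow> ricci R k i = ricci R i k"
proof -
  assume "i \<in> idx" "k \<in> idx"
  then have "R k j i j = R i j k j" if "j \<in> idx" for j
    using R that unfolding alg_curv_def by blast
  then show ?thesis
    unfolding ricci_def by (rule sum.cong[OF refl])
qed

lemma pair_antisym_weyl: "pair_antisym (weyl R)"
proof -
  have "weyl R j i k l = - weyl R i j k l \<and> weyl R i j l k = - weyl R i j k l"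
    if "i \<in> idx" "j \<in> idx" "k \<in> idx" "l \<in> idx" for i j k l
  proof -
    have "R j i k l = - R i j k l" "R i j l k = - R i j k l"
      using R that unfolding alg_curv_def by blast+
    then show ?thesis
      by (simp add: weyl_def algebra_simps)
  qed
  then show ?thesis
    unfolding pair_antisym_def by blast
qed

lemma weyl_swap_pairs:
  assumes "i \<in> idx" "j \<in> idx" "k \<in> idx" "l \<in> idx"
  shows "weyl R k l i j = weyl R i j k l"
proof -
  have "R k l i j = R i j k l"
    using R assms unfolding alg_curv_def by blast
  then show ?thesis
    using assms by (simp add: weyl_def ricci_sym kdelta_def algebra_simps)
qed

lemma pair_matrix_weyl_sym:
  "p < 6 \<Longrightarrow> q < 6 \<Longrightarrow> pair_matrix (weyl R) q p = pair_matrix (weyl R) p q"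
  by (simp add: pair_matrix_def weyl_swap_pairs pair_in_idx)

lemma sd_block_weyl_sym: "sd_block t (weyl R) b a = sd_block t (weyl R) a b"
proof -
  have "(\<Sum>r<6. \<Sum>s<6. sd_basis t b r * pair_matrix (weyl R) r s * sd_basis t a s)
      = (\<Sum>r<6. \<Sum>s<6. sd_basis t a s * pair_matrix (weyl R) s r * sd_basis t b r)"
    by (intro sum.cong refl) (simp add: pair_matrix_weyl_sym mult_ac)
  then show ?thesis
    unfolding sd_block_def by (subst sum.swap) simp
qed

lemma sd_block_weyl_trace:
  assumes "t\<^sup>2 = 1"
  shows "(\<Sum>a<3. sd_block t (weyl R) a a) = 0"
proof -
  have tt: "t * (t * x) = x" for x
    using assms by (simp add: power2_eq_square flip: mult.assoc)
  show ?thesis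
    by (simp add: sd_block_def sum_lessThan_3 sum_lessThan_6 sd_basis_def hodge_sign_def pair_matrix_def
      weyl_def ricci_def scal_def sum_idx kdelta_def curv_simps field_simps tt)
qed

text \<open>The Weyl tensor commutes with \<open>\<star>\<close>: unlike the traceless Ricci part, it has no
  \<open>\<Lambda>\<^sup>+ \<rightarrow> \<Lambda>\<^sup>-\<close> block.\<close>
lemma weyl_cross_block:
  "a < 3 \<Longrightarrow> b < 3
    \<Longrightarrow> (\<Sum>r<6. \<Sum>s<6. sd_basis 1 a r * pair_matrix (weyl R) r s * sd_basis (-1) b s) = 0"
  unfolding less_3_cases
  by (elim disjE; simp add: sum_lessThan_6 sd_basis_def hodge_sign_def pair_matrix_def
      weyl_def ricci_def scal_def sum_idx kdelta_def curv_simps field_simps)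

lemma weyl_quad_sd_coords:
  "(\<Sum>p<6. \<Sum>q<6. pair_matrix (weyl R) p q * sd_coords u v p * sd_coords u v q)
    = (quad3 (sd_block 1 (weyl R)) u + quad3 (sd_block (-1) (weyl R)) v) / 2"
proof -
  let ?W = "pair_matrix (weyl R)"
  define U where "U p = (\<Sum>a<3. u a * sd_basis 1 a p)" for p
  define V where "V p = (\<Sum>a<3. v a * sd_basis (-1) a p)" for p
  have cross: "(\<Sum>p<6. \<Sum>q<6. ?W p q * U p * V q) = 0"
    unfolding U_def V_def bilinear_sum_expand by (simp add: weyl_cross_block)
  have cross': "(\<Sum>p<6. \<Sum>q<6. ?W p q * V p * U q) = 0"
  proof -
    have "(\<Sum>p<6. \<Sum>q<6. ?W p q * V p * U q) = (\<Sum>q<6. \<Sum>p<6. ?W q p * U q * V p)"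
      by (subst sum.swap) (intro sum.cong refl; simp add: pair_matrix_weyl_sym)
    then show ?thesis
      using cross by simp
  qed
  have diag: "(\<Sum>p<6. \<Sum>q<6. ?W p q * (\<Sum>a<3. w a * sd_basis t a p) * (\<Sum>b<3. w b * sd_basis t b q))
      = 2 * quad3 (sd_block t (weyl R)) w" for w t
  proof -
    have "2 * quad3 (sd_block t (weyl R)) w = (\<Sum>a<3. \<Sum>b<3. w a * w b * (2 * sd_block t (weyl R) a b))"
      by (simp add: quad3_def sum_distrib_left mult_ac)
    then show ?thesis
      unfolding bilinear_sum_expand by (simp add: sd_block_def)
  qed
  have coords: "sd_coords u v p = (U p + V p) / 2" for p
    by (simp add: sd_coords_def U_def V_def sum.distrib)
  have "(\<Sum>p<6. \<Sum>q<6. ?W p q * sd_coords u v p * sd_coords u v q)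
      = (\<Sum>p<6. \<Sum>q<6. (?W p q * U p * U q + ?W p q * U p * V q + ?W p q * V p * U q
                              + ?W p q * V p * V q) / 4)"
    by (simp add: coords field_simps)
  also have "\<dots> = ((\<Sum>p<6. \<Sum>q<6. ?W p q * U p * U q) + (\<Sum>p<6. \<Sum>q<6. ?W p q * U p * V q)
      + (\<Sum>p<6. \<Sum>q<6. ?W p q * V p * U q) + (\<Sum>p<6. \<Sum>q<6. ?W p q * V p * V q)) / 4"
    by (simp only: sum.distrib flip: sum_divide_distrib)
  also have "\<dots> = (quad3 (sd_block 1 (weyl R)) u + quad3 (sd_block (-1) (weyl R)) v) / 2"
    using diag[of u 1, folded U_def] diag[of v "-1", folded V_def] by (simp add: cross cross')
  finally show ?thesis .
qed

lemma norm2form_weyl_plus: "norm2form (weyl_plus R) = sqrt (frob3 (sd_block 1 (weyl R)))"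
  unfolding weyl_plus_def
  by (rule norm2form_sandwich_sd[OF pair_antisym_proj_plus pair_antisym_weyl _ pair_matrix_proj_plus]) simp_all

lemma norm2form_weyl_minus: "norm2form (weyl_minus R) = sqrt (frob3 (sd_block (-1) (weyl R)))"
  unfolding weyl_minus_def
  by (rule norm2form_sandwich_sd[OF pair_antisym_proj_minus pair_antisym_weyl _ pair_matrix_proj_minus]) simp_all

end

context
  fixes R :: tensor4
  assumes R: "alg_curv R" and E: "einstein_at R"
begin

lemma einstein_ricci: "i \<in> idx \<Longrightarrow> k \<in> idx \<Longrightarrow> ricci R i k = scal R / 4 * kdelta i k"
proof -
  obtain c where c: "\<And>i k. i \<in> idx \<Longrightarrow> k \<in> idx \<Longrightarrow> ricci R i k = c * kdelta i k"
    using E unfolding einstein_at_def by blast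
  have "scal R = 4 * c"
    by (simp add: scal_def sum_idx c idx_eq kdelta_def)
  then show "i \<in> idx \<Longrightarrow> k \<in> idx \<Longrightarrow> ricci R i k = scal R / 4 * kdelta i k"
    by (simp add: c)
qed

lemma pair_matrix_einstein:
  "p < 6 \<Longrightarrow> q < 6 \<Longrightarrow> pair_matrix R p q = pair_matrix (weyl R) p q + scal R / 12 * (if p = q then 1 else 0)"
  unfolding less_6_cases
  by (elim disjE; simp add: pair_matrix_def weyl_def einstein_ricci idx_eq kdelta_def)

lemma curv_quad_einstein:
  "(\<Sum>p<6. \<Sum>q<6. pair_matrix R p q * \<alpha> p * \<alpha> q)
    = (\<Sum>p<6. \<Sum>q<6. pair_matrix (weyl R) p q * \<alpha> p * \<alpha> q) + scal R / 12 * (\<Sum>r<6. (\<alpha> r)\<^sup>2)"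
  by (simp add: pair_matrix_einstein sum_lessThan_6 power2_eq_square algebra_simps)

text \<open>The 2-form \<open>(u + v)/\<surd>2\<close> is decomposable because \<open>|u| = |v|\<close>.\<close>
lemma sec_curv_self_dual_split:
  assumes u: "norm3 u = 1" and v: "norm3 v = 1"
  shows "\<exists>x y. lin_indep2 x y \<and> sec_curv R x y
    = scal R / 12 + (quad3 (sd_block 1 (weyl R)) u + quad3 (sd_block (-1) (weyl R)) v) / 2"
proof -
  let ?\<alpha> = "sd_coords u v"
  have unit: "(\<Sum>r<6. (?\<alpha> r)\<^sup>2) = 1"
    using u v by (simp add: sd_coords_norm)
  then obtain r where r: "r < 6" "?\<alpha> r \<noteq> 0"
    by (metis (no_types, lifting) lessThan_iff power_zero_numeral sum.neutral zero_neq_one)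
  have "?\<alpha> 0 * ?\<alpha> 5 - ?\<alpha> 1 * ?\<alpha> 4 + ?\<alpha> 2 * ?\<alpha> 3 = 0"
    using sd_coords_pluecker[of u v] u v by simp
  then obtain x y where xy: "lin_indep2 x y" "\<And>q. q < 6 \<Longrightarrow> wedge x y q = ?\<alpha> q"
    using decomposable_of_pluecker r by blast
  have "sec_curv R x y = (\<Sum>p<6. \<Sum>q<6. pair_matrix R p q * ?\<alpha> p * ?\<alpha> q)"
    by (simp add: sec_curv_wedge[OF R] xy(2) unit)
  also have "\<dots> = scal R / 12 + (quad3 (sd_block 1 (weyl R)) u + quad3 (sd_block (-1) (weyl R)) v) / 2"
    by (simp add: curv_quad_einstein weyl_quad_sd_coords[OF R] unit)
  finally show ?thesis
    using xy(1) by blast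
qed

lemma weyl_norms_le_of_sec_sign:
  assumes sign: "\<sigma>\<^sup>2 = 1" and sec: "\<And>x y. lin_indep2 x y \<Longrightarrow> 0 \<le> \<sigma> * sec_curv R x y"
  shows "norm2form (weyl_plus R) + norm2form (weyl_minus R) \<le> \<sigma> * scal R / sqrt 6"
proof -
  let ?A = "\<lambda>a b. \<sigma> * sd_block 1 (weyl R) a b" and ?B = "\<lambda>a b. \<sigma> * sd_block (-1) (weyl R) a b"
  have frob: "frob3 (\<lambda>a b. \<sigma> * w a b) = frob3 w" for w
    by (simp add: frob3_def power_mult_distrib sign)
  have quad: "quad3 (\<lambda>a b. \<sigma> * w a b) u = \<sigma> * quad3 w u" for w u
    by (simp add: quad3_def sum_distrib_left mult.assoc)
  have trace: "(\<Sum>a<3. \<sigma> * sd_block t (weyl R) a a) = 0" if "t\<^sup>2 = 1" for t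
    by (simp add: sd_block_weyl_trace[OF R that] flip: sum_distrib_left)
  have "0 \<le> \<sigma> * scal R / 6 + quad3 ?A u + quad3 ?B v" if uv: "norm3 u = 1" "norm3 v = 1" for u v
  proof -
    obtain x y where "lin_indep2 x y"
      and "sec_curv R x y = scal R / 12 + (quad3 (sd_block 1 (weyl R)) u + quad3 (sd_block (-1) (weyl R)) v) / 2"
      using sec_curv_self_dual_split[OF uv] by blast
    with sec have "0 \<le> \<sigma> * (scal R / 12 + (quad3 (sd_block 1 (weyl R)) u + quad3 (sd_block (-1) (weyl R)) v) / 2)"
      by metis
    also have "\<dots> = (\<sigma> * scal R / 6 + quad3 ?A u + quad3 ?B v) / 2"
      unfolding quad by (simp add: field_simps)
    finally show ?thesis
      by simp
  qed
  then have "sqrt (frob3 ?A) + sqrt (frob3 ?B) \<le> \<sigma> * scal R / sqrt 6"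
    by (intro frob3_sum_le_of_unit_bound) (simp_all add: sd_block_weyl_sym[OF R] trace)
  then show ?thesis
    by (simp add: frob norm2form_weyl_plus[OF R] norm2form_weyl_minus[OF R])
qed

end

theorem proposition2p2:
  fixes M :: "'p set" and R :: "'p \<Rightarrow> tensor4"
  assumes curv: "\<forall>p\<in>M. alg_curv (R p)"
    and einstein: "\<forall>p\<in>M. einstein_at (R p)"
    and semidef: "(\<forall>p\<in>M. \<forall>x y. lin_indep2 x y \<longrightarrow> sec_curv (R p) x y \<ge> 0)
                \<or> (\<forall>p\<in>M. \<forall>x y. lin_indep2 x y \<longrightarrow> sec_curv (R p) x y \<le> 0)"
  shows "\<forall>p\<in>M. \<bar>scal (R p)\<bar> / sqrt 6 \<ge> norm2form (weyl_plus (R p)) + norm2form (weyl_minus (R p))"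
proof
  fix p
  assume "p \<in> M"
  then have R: "alg_curv (R p)" and E: "einstein_at (R p)"
    using curv einstein by blast+
  from semidef obtain \<sigma> :: real where "\<sigma>\<^sup>2 = 1" "\<And>x y. lin_indep2 x y \<Longrightarrow> 0 \<le> \<sigma> * sec_curv (R p) x y"
    using \<open>p \<in> M\<close> by (metis mult_1 mult_minus1 neg_0_le_iff_le power2_minus power_one)
  then have "norm2form (weyl_plus (R p)) + norm2form (weyl_minus (R p)) \<le> \<sigma> * scal (R p) / sqrt 6"
    by (rule weyl_norms_le_of_sec_sign[OF R E])
  also have "\<dots> \<le> \<bar>scal (R p)\<bar> / sqrt 6"
    using \<open>\<sigma>\<^sup>2 = 1\<close> by (intro divide_right_mono) (auto simp: power2_eq_1_iff abs_if)
  finally show "\<bar>scal (R p)\<bar> / sqrt 6 \<ge> norm2form (weyl_plus (R p)) + norm2form (weyl_minus (R p))" .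
qed

end
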